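(* Let $\mathcal C$ be a collective choice problem satisfying Generic Finite Alternatives. For the amendment procedure with $T$ rounds and initial default $x^0$, the equilibrium outcome correspondence satisfies $f_T(x^0)=\{\phi^T(x^0)\}$. Moreover: (a) There exists a pure-strategy equilibrium in which (i) the agenda setter always proposes $\phi(x)$ when the current default is $x$, and (ii) each voter $i$ votes to approve proposal $y$ in round $t$ if and only if $\phi^{T-t}(y)\succsim_i\phi^{T-t}(x^{t-1})$, where $x^{t-1}$ is the current default. (b) For an initial default $x^0$, $f_T(x^0)=\{x^0\}$ if and only if $x^0\in E$. (c) If $T\ge |X|-1$, then $\bigcup_{x^0\in X}f_T(x^0)=E$.
   Context: Collective choice problem: voters $N=\{1,\dots,n\}$ ($n$ odd) and a non-voting agenda setter $A$ choose from a policy space $X$; each player $i\in N\cup\{A\}$ has a complete, transitive preference $\succsim_i$ with utility representation $u_i$. $x\succ_M y$ means a strict majority of voters strictly prefer $x$ to $y$. Generic Finite Alternatives: $X$ is finite and all preferences are antisymmetric. Define $M(x)=\{y\in X: y\succ_M x \text{ or } y=x\}$, the agenda setter's favorite improvement map $\phi:X\to X$ by $\{\phi(x)\}=\arg\max_{y\in M(x)}u_A(y)$, $\phi^t$ its $t$-fold iterate ($\phi^0$ the identity), and $E=\{x\in X: x=\phi(x)\}$. Amendment procedure with $T$ rounds: initial default $x^0$; in each round $t$ the agenda setter proposes $a^t\in X$, voted against the default $x^{t-1}$ by simple majority; $x^t=a^t$ if it passes and $x^t=x^{t-1}$ otherwise; $x^T$ is implemented. Strategies may depend on the full history and may be mixed.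 Equilibrium: subgame perfect equilibrium with as-if-pivotal voting (at histories where passage leads to continuation outcome $x$ and rejection to $y$ regardless of the vote composition, voters with a strict preference between $x$ and $y$ vote for the option leading to the preferred one). $f_T(x^0)$ denotes the set of policies implemented with positive probability in some equilibrium of the $T$-round game with initial default $x^0$. *)

theory Defs
  imports "HOL-Probability.Probability"
begin

(* Policy space X = UNIV :: 'a (finite type); voters N = UNIV :: 'v (finite type, n = CARD('v)).
   Voter i's preference: x \<succsim>_i y iff u i x \<ge> u i y; agenda setter's utility uA. *)

type_synonym ('a, 'v) hist = "('a \<times> ('v \<Rightarrow> bool)) list"

definition passes :: "('v::finite \<Rightarrow> bool) \<Rightarrow> bool" where
  "passes S \<longleftrightarrow> 2 * card {i. S i} > CARD('v)"

definition maj :: "('v::finite \<Rightarrow> 'a \<Rightarrow> real) \<Rightarrow> 'a \<Rightarrow> 'a \<Rightarrow> bool" where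
  "maj u x y \<longleftrightarrow> 2 * card {i. u i x > u i y} > CARD('v)"

definition Mset :: "('v::finite \<Rightarrow> 'a \<Rightarrow> real) \<Rightarrow> 'a \<Rightarrow> 'a set" where
  "Mset u x = {y. maj u y x \<or> y = x}"

definition phi :: "('v::finite \<Rightarrow> 'a \<Rightarrow> real) \<Rightarrow> ('a \<Rightarrow> real) \<Rightarrow> 'a \<Rightarrow> 'a" where
  "phi u uA x = (THE y. y \<in> Mset u x \<and> (\<forall>z\<in>Mset u x. uA z \<le> uA y))"

definition Eset :: "('v::finite \<Rightarrow> 'a \<Rightarrow> real) \<Rightarrow> ('a \<Rightarrow> real) \<Rightarrow> 'a set" where
  "Eset u uA = {x. phi u uA x = x}"

definition dflt :: "'a \<Rightarrow> ('a, 'v::finite) hist \<Rightarrow> 'a" where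
  "dflt x0 h = foldl (\<lambda>x (a, S). if passes S then a else x) x0 h"

type_synonym ('a, 'v) setter_strat = "('a, 'v) hist \<Rightarrow> 'a pmf"
type_synonym ('a, 'v) voter_strat = "'v \<Rightarrow> ('a, 'v) hist \<Rightarrow> 'a \<Rightarrow> bool pmf"

(* voters vote simultaneously and independently (behavioural strategies) *)
definition votes :: "('a, 'v::finite) voter_strat \<Rightarrow> ('a, 'v) hist \<Rightarrow> 'a \<Rightarrow> ('v \<Rightarrow> bool) pmf" where
  "votes \<sigma>V h a = Pi_pmf UNIV False (\<lambda>i. \<sigma>V i h a)"

(* distribution of the implemented policy from history h with k rounds remaining *)
primrec cont :: "('a, 'v::finite) setter_strat \<Rightarrow> ('a, 'v) voter_strat \<Rightarrow> 'a \<Rightarrow> nat \<Rightarrow> ('a, 'v) hist \<Rightarrow> 'a pmf" where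
  "cont \<sigma>A \<sigma>V x0 0 h = return_pmf (dflt x0 h)"
| "cont \<sigma>A \<sigma>V x0 (Suc k) h =
     bind_pmf (\<sigma>A h) (\<lambda>a. bind_pmf (votes \<sigma>V h a) (\<lambda>S. cont \<sigma>A \<sigma>V x0 k (h @ [(a, S)])))"

(* outcome distribution in the T-round game starting at a setter node h *)
definition node_out :: "('a, 'v::finite) setter_strat \<Rightarrow> ('a, 'v) voter_strat \<Rightarrow> 'a \<Rightarrow> nat \<Rightarrow> ('a, 'v) hist \<Rightarrow> 'a pmf" where
  "node_out \<sigma>A \<sigma>V x0 T h = cont \<sigma>A \<sigma>V x0 (T - length h) h"

(* outcome distribution starting at the voting node where proposal a was made after history h *)
definition vnode_out :: "('a, 'v::finite) setter_strat \<Rightarrow> ('a, 'v) voter_strat \<Rightarrow> 'a \<Rightarrow> nat \<Rightarrow> ('a, 'v) hist \<Rightarrow> 'a \<Rightarrow> 'a pmf" where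
  "vnode_out \<sigma>A \<sigma>V x0 T h a =
     bind_pmf (votes \<sigma>V h a) (\<lambda>S. cont \<sigma>A \<sigma>V x0 (T - Suc (length h)) (h @ [(a, S)]))"

definition EU :: "'a pmf \<Rightarrow> ('a \<Rightarrow> real) \<Rightarrow> real" where
  "EU p f = measure_pmf.expectation p f"

(* subgame perfection: in every subgame (setter nodes and voting nodes of rounds 1..T),
   no player gains by deviating to any other strategy *)
definition spe :: "('v::finite \<Rightarrow> 'a \<Rightarrow> real) \<Rightarrow> ('a \<Rightarrow> real) \<Rightarrow> nat \<Rightarrow> 'a
    \<Rightarrow> ('a, 'v) setter_strat \<Rightarrow> ('a, 'v) voter_strat \<Rightarrow> bool" where
  "spe u uA T x0 \<sigma>A \<sigma>V \<longleftrightarrow>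
    (\<forall>h. length h < T \<longrightarrow>
       (\<forall>\<sigma>A'. EU (node_out \<sigma>A' \<sigma>V x0 T h) uA \<le> EU (node_out \<sigma>A \<sigma>V x0 T h) uA) \<and>
       (\<forall>i \<tau>. EU (node_out \<sigma>A (\<sigma>V(i := \<tau>)) x0 T h) (u i) \<le> EU (node_out \<sigma>A \<sigma>V x0 T h) (u i)) \<and>
       (\<forall>a. (\<forall>\<sigma>A'. EU (vnode_out \<sigma>A' \<sigma>V x0 T h a) uA \<le> EU (vnode_out \<sigma>A \<sigma>V x0 T h a) uA) \<and>
            (\<forall>i \<tau>. EU (vnode_out \<sigma>A (\<sigma>V(i := \<tau>)) x0 T h a) (u i)
                     \<le> EU (vnode_out \<sigma>A \<sigma>V x0 T h a) (u i))))"

definition as_if_pivotal :: "('v::finite \<Rightarrow> 'a \<Rightarrow> real) \<Rightarrow> nat \<Rightarrow> 'a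
    \<Rightarrow> ('a, 'v) setter_strat \<Rightarrow> ('a, 'v) voter_strat \<Rightarrow> bool" where
  "as_if_pivotal u T x0 \<sigma>A \<sigma>V \<longleftrightarrow>
    (\<forall>h a x y. length h < T \<longrightarrow>
       (\<forall>S. passes S \<longrightarrow> cont \<sigma>A \<sigma>V x0 (T - Suc (length h)) (h @ [(a, S)]) = return_pmf x) \<longrightarrow>
       (\<forall>S. \<not> passes S \<longrightarrow> cont \<sigma>A \<sigma>V x0 (T - Suc (length h)) (h @ [(a, S)]) = return_pmf y) \<longrightarrow>
       (\<forall>i. (u i x > u i y \<longrightarrow> \<sigma>V i h a = return_pmf True) \<and>
            (u i y > u i x \<longrightarrow> \<sigma>V i h a = return_pmf False)))"

definition is_eq :: "('v::finite \<Rightarrow> 'a \<Rightarrow> real) \<Rightarrow> ('a \<Rightarrow> real) \<Rightarrow> nat \<Rightarrow> 'a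
    \<Rightarrow> ('a, 'v) setter_strat \<Rightarrow> ('a, 'v) voter_strat \<Rightarrow> bool" where
  "is_eq u uA T x0 \<sigma>A \<sigma>V \<longleftrightarrow> spe u uA T x0 \<sigma>A \<sigma>V \<and> as_if_pivotal u T x0 \<sigma>A \<sigma>V"

definition fT :: "('v::finite \<Rightarrow> 'a \<Rightarrow> real) \<Rightarrow> ('a \<Rightarrow> real) \<Rightarrow> nat \<Rightarrow> 'a \<Rightarrow> 'a set" where
  "fT u uA T x0 = {x. \<exists>\<sigma>A \<sigma>V. is_eq u uA T x0 \<sigma>A \<sigma>V \<and> x \<in> set_pmf (cont \<sigma>A \<sigma>V x0 T [])}"

end

theory Submission
  imports Defs
begin

(* Backward induction on the number k of remaining rounds: in every equilibrium the subgame
   starting from default x implements phi^k x. When a proposal a is voted on with k rounds to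
   follow, as-if-pivotal voters compare the outcomes phi^k a and phi^k x, so the round ends at
   phi^k a if it beats phi^k x by majority and at phi^k x otherwise. Either outcome lies in
   M(phi^k x), whose best element for the setter, phi^(k+1) x, is reached by proposing phi x;
   as uA is injective, maximal expected utility forces the outcome to be exactly phi^(k+1) x.
   Along an orbit of phi the setter's utility strictly increases until a fixed point is reached,
   so phi^T x0 = x0 iff x0 is in E, and on a finite X every orbit is stationary after |X| - 1
   steps. *)

lemma EU_return_pmf [simp]: "EU (return_pmf x) f = f x"
  by (simp add: EU_def)

lemma EU_le_if_bounded:
  fixes p :: "'a::finite pmf"
  assumes "\<And>z. z \<in> set_pmf p \<Longrightarrow> f z \<le> c"
  shows "EU p f \<le> c"
  unfolding EU_def using assms
  by (intro measure_pmf.integral_le_const)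
    (auto simp: integrable_measure_pmf_finite AE_measure_pmf_iff)

lemma return_pmf_if_EU_maximal:
  fixes p :: "'a::finite pmf"
  assumes "inj f" and bounded: "\<And>z. z \<in> set_pmf p \<Longrightarrow> f z \<le> f c" and "f c \<le> EU p f"
  shows "p = return_pmf c"
proof -
  have int: "integrable (measure_pmf p) g" for g :: "'a \<Rightarrow> real"
    by (simp add: integrable_measure_pmf_finite)
  have nonneg: "AE z in measure_pmf p. 0 \<le> f c - f z"
    using bounded by (simp add: AE_measure_pmf_iff)
  have "measure_pmf.expectation p (\<lambda>z. f c - f z) = f c - EU p f"
    unfolding EU_def by (simp add: int)
  also have "\<dots> \<le> 0" using assms(3) by simp
  finally have "measure_pmf.expectation p (\<lambda>z. f c - f z) = 0"
    using integral_nonneg_AE[OF nonneg] by linarith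
  hence "AE z in measure_pmf p. f c - f z = 0"
    using integral_nonneg_eq_0_iff_AE[OF int nonneg] by simp
  hence "set_pmf p \<subseteq> {c}"
    using \<open>inj f\<close> by (auto simp: AE_measure_pmf_iff inj_eq)
  thus ?thesis by (simp add: set_pmf_subset_singleton)
qed

lemma dflt_snoc [simp]: "dflt x0 (h @ [(a, S)]) = (if passes S then a else dflt x0 h)"
  by (simp add: dflt_def)

lemma passes_mono: "{i. S i} \<subseteq> {i. S' i} \<Longrightarrow> passes S \<Longrightarrow> passes S'"
  unfolding passes_def using card_mono[of "{i. S' i}" "{i. S i}"] by auto

lemma passes_unanimous: "passes (\<lambda>_. True)" and not_passes_unanimous: "\<not> passes (\<lambda>_. False)"
  by (simp_all add: passes_def)

lemma votes_pure:
  assumes "\<And>i. \<sigma>V i h a = return_pmf (S i)"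
  shows "votes \<sigma>V h a = return_pmf S"
  using assms by (simp add: votes_def)

lemma set_pmf_votes: "S \<in> set_pmf (votes \<sigma>V h a) \<Longrightarrow> S i \<in> set_pmf (\<sigma>V i h a)"
  by (auto simp: votes_def set_Pi_pmf PiE_dflt_def)

lemma cont_cong_setter:
  assumes "\<And>g. length h \<le> length g \<Longrightarrow> \<sigma>A g = \<sigma>A' g"
  shows "cont \<sigma>A \<sigma>V x0 k h = cont \<sigma>A' \<sigma>V x0 k h"
  using assms
proof (induction k arbitrary: h)
  case (Suc k)
  have "cont \<sigma>A \<sigma>V x0 k (h @ [(a, S)]) = cont \<sigma>A' \<sigma>V x0 k (h @ [(a, S)])" for a S
    using Suc.prems by (intro Suc.IH) auto
  then show ?case using Suc.prems by simp
qed simp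

lemma as_if_pivotal_pure_votes:
  assumes "as_if_pivotal u T x0 \<sigma>A \<sigma>V" and "length h < T"
    and "\<And>S. passes S \<Longrightarrow> cont \<sigma>A \<sigma>V x0 (T - Suc (length h)) (h @ [(a, S)]) = return_pmf x"
    and "\<And>S. \<not> passes S \<Longrightarrow> cont \<sigma>A \<sigma>V x0 (T - Suc (length h)) (h @ [(a, S)]) = return_pmf y"
    and "\<And>i. u i x \<noteq> u i y"
  shows "votes \<sigma>V h a = return_pmf (\<lambda>i. u i y < u i x)"
proof (rule votes_pure)
  fix i
  have "(u i y < u i x \<longrightarrow> \<sigma>V i h a = return_pmf True) \<and>
      (u i x < u i y \<longrightarrow> \<sigma>V i h a = return_pmf False)"
    using assms(1-4) unfolding as_if_pivotal_def by blast
  then show "\<sigma>V i h a = return_pmf (u i y < u i x)"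
    using assms(5)[of i] by (cases "u i y < u i x") auto
qed

lemma sincere_vote_weakly_dominant:
  fixes u :: "'v::finite \<Rightarrow> 'a \<Rightarrow> real"
  assumes others: "\<And>j. j \<noteq> i \<Longrightarrow> S j = (u j y \<le> u j x)"
  shows "u i (if passes S then x else y) \<le> u i (if passes (\<lambda>j. u j y \<le> u j x) then x else y)"
proof (cases "u i y < u i x" "u i x < u i y" rule: case_split[case_product case_split])
  case True_False
  have "{j. S j} \<subseteq> {j. u j y \<le> u j x}"
  proof (intro Collect_mono impI)
    show "u j y \<le> u j x" if "S j" for j
      using that True_False others[of j] by (cases "j = i") simp_all
  qed
  from passes_mono[OF this] show ?thesis using True_False by auto
next
  case False_True
  have "{j. u j y \<le> u j x} \<subseteq> {j. S j}"
  proof (intro Collect_mono impI)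
    show "S j" if "u j y \<le> u j x" for j
      using that False_True others[of j] by (cases "j = i") simp_all
  qed
  from passes_mono[OF this] show ?thesis using False_True by auto
next
  case False_False
  then have "u i x = u i y" by linarith
  then show ?thesis by simp
qed linarith

lemma passes_sincere_iff_maj:
  assumes "\<And>i. inj (u i)" and "x \<noteq> y"
  shows "passes (\<lambda>i. u i y \<le> u i x) \<longleftrightarrow> maj u x y"
proof -
  have "{i. u i y \<le> u i x} = {i. u i y < u i x}"
    using assms by (auto simp: inj_eq less_le)
  thus ?thesis by (simp add: passes_def maj_def)
qed

lemma phi_best_improvement:
  fixes uA :: "'a::finite \<Rightarrow> real"
  assumes "inj uA"
  shows "phi u uA x \<in> Mset u x \<and> (\<forall>z\<in>Mset u x. uA z \<le> uA (phi u uA x))"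
proof -
  let ?M = "Mset u x"
  have "uA ` ?M \<noteq> {}" by (auto simp: Mset_def)
  hence "Max (uA ` ?M) \<in> uA ` ?M" by (intro Max_in) auto
  then obtain y where y: "y \<in> ?M" "uA y = Max (uA ` ?M)" by auto
  have best: "\<forall>z\<in>?M. uA z \<le> uA y" using y by simp
  have "w = y" if "w \<in> ?M \<and> (\<forall>z\<in>?M. uA z \<le> uA w)" for w
    using that y best \<open>inj uA\<close> by (metis order_antisym inj_eq)
  with y best have "\<exists>!y. y \<in> ?M \<and> (\<forall>z\<in>?M. uA z \<le> uA y)" by blast
  thus ?thesis unfolding phi_def by (rule theI')
qed

lemma uA_le_phi_if_maj:
  fixes uA :: "'a::finite \<Rightarrow> real"
  shows "inj uA \<Longrightarrow> maj u z x \<Longrightarrow> uA z \<le> uA (phi u uA x)"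
  using phi_best_improvement by (fastforce simp: Mset_def)

lemma maj_phi_if_moved:
  fixes uA :: "'a::finite \<Rightarrow> real"
  shows "inj uA \<Longrightarrow> phi u uA x \<noteq> x \<Longrightarrow> maj u (phi u uA x) x"
  using phi_best_improvement by (fastforce simp: Mset_def)

lemma uA_less_phi_if_moved:
  fixes uA :: "'a::finite \<Rightarrow> real"
  assumes "inj uA" and "phi u uA x \<noteq> x"
  shows "uA x < uA (phi u uA x)"
proof -
  have "uA x \<le> uA (phi u uA x)"
    using phi_best_improvement[OF assms(1), of u x] by (simp add: Mset_def)
  with assms show ?thesis by (metis inj_eq order_less_le)
qed

lemma funpow_fixpoint_stable: "f ((f ^^ j) x) = (f ^^ j) x \<Longrightarrow> (f ^^ (j + m)) x = (f ^^ j) x"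
  by (induction m) auto

lemma funpow_potential_mono:
  fixes g :: "'a \<Rightarrow> 'b::linorder"
  assumes improving: "\<And>x. f x \<noteq> x \<Longrightarrow> g x < g (f x)" and "m \<le> n"
  shows "g ((f ^^ m) x) \<le> g ((f ^^ n) x)"
  using \<open>m \<le> n\<close>
proof (induction n rule: dec_induct)
  case (step n)
  have "g ((f ^^ n) x) \<le> g (f ((f ^^ n) x))"
    using improving[of "(f ^^ n) x"] by (cases "f ((f ^^ n) x) = (f ^^ n) x") auto
  with step.IH show ?case by simp
qed simp

lemma funpow_eq_self_iff_fixpoint:
  fixes g :: "'a \<Rightarrow> 'b::linorder"
  assumes improving: "\<And>x. f x \<noteq> x \<Longrightarrow> g x < g (f x)" and "1 \<le> n"
  shows "(f ^^ n) x = x \<longleftrightarrow> f x = x"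
proof
  assume "f x = x"
  thus "(f ^^ n) x = x" using funpow_fixpoint_stable[of f 0 x n] by simp
next
  assume returns: "(f ^^ n) x = x"
  show "f x = x"
  proof (rule ccontr)
    assume "f x \<noteq> x"
    hence "g x < g ((f ^^ 1) x)" using improving by simp
    also have "\<dots> \<le> g ((f ^^ n) x)"
      by (rule funpow_potential_mono[of f g, OF improving \<open>1 \<le> n\<close>])
    finally show False using returns by simp
  qed
qed

lemma funpow_reaches_fixpoint:
  fixes f :: "'a::finite \<Rightarrow> 'a" and g :: "'a \<Rightarrow> 'b::linorder"
  assumes improving: "\<And>x. f x \<noteq> x \<Longrightarrow> g x < g (f x)" and "CARD('a) \<le> n + 1"
  shows "f ((f ^^ n) x) = (f ^^ n) x"
proof -
  have "\<not> inj_on (\<lambda>j. (f ^^ j) x) {0..n + 1}"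
  proof
    assume "inj_on (\<lambda>j. (f ^^ j) x) {0..n + 1}"
    from card_inj_on_le[OF this] have "card {0..n + 1} \<le> CARD('a)" by simp
    with assms(2) show False by simp
  qed
  then obtain i j where "i < j" "j \<le> n + 1" and cycle: "(f ^^ i) x = (f ^^ j) x"
    unfolding inj_on_def by (metis atLeastAtMost_iff linorder_neqE_nat)
  have fixed: "f ((f ^^ i) x) = (f ^^ i) x"
  proof (rule ccontr)
    assume "f ((f ^^ i) x) \<noteq> (f ^^ i) x"
    hence "g ((f ^^ i) x) < g ((f ^^ Suc i) x)" using improving by simp
    also have "\<dots> \<le> g ((f ^^ j) x)"
      using funpow_potential_mono[of f g, OF improving, of "Suc i" j x] \<open>i < j\<close> by simp
    finally show False using cycle by simp
  qed
  have "(f ^^ n) x = (f ^^ i) x"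
    using funpow_fixpoint_stable[OF fixed, of "n - i"] \<open>i < j\<close> \<open>j \<le> n + 1\<close> by simp
  with fixed show ?thesis by simp
qed

definition setter_phi ::
    "('v::finite \<Rightarrow> 'a \<Rightarrow> real) \<Rightarrow> ('a \<Rightarrow> real) \<Rightarrow> 'a \<Rightarrow> ('a, 'v) setter_strat" where
  "setter_phi u uA x0 h = return_pmf (phi u uA (dflt x0 h))"

definition voter_sophisticated ::
    "('v::finite \<Rightarrow> 'a \<Rightarrow> real) \<Rightarrow> ('a \<Rightarrow> real) \<Rightarrow> nat \<Rightarrow> 'a \<Rightarrow> ('a, 'v) voter_strat" where
  "voter_sophisticated u uA T x0 i h y =
     return_pmf (u i ((phi u uA ^^ (T - Suc (length h))) y)
                 \<ge> u i ((phi u uA ^^ (T - Suc (length h))) (dflt x0 h)))"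

locale amendment_game =
  fixes u :: "'v::finite \<Rightarrow> 'a::finite \<Rightarrow> real" and uA :: "'a \<Rightarrow> real"
  assumes inj_u: "\<And>i. inj (u i)" and inj_uA: "inj uA"
begin

abbreviation \<phi> :: "'a \<Rightarrow> 'a" where "\<phi> \<equiv> phi u uA"

lemma phi_improving: "\<phi> x \<noteq> x \<Longrightarrow> uA x < uA (\<phi> x)"
  by (rule uA_less_phi_if_moved[OF inj_uA])

(* Backward-induction outcome of voting proposal a against default x with k rounds to follow. *)
definition vote_outcome :: "nat \<Rightarrow> 'a \<Rightarrow> 'a \<Rightarrow> 'a" where
  "vote_outcome k x a = (if maj u ((\<phi> ^^ k) a) ((\<phi> ^^ k) x) then (\<phi> ^^ k) a else (\<phi> ^^ k) x)"

lemma vote_outcome_sincere: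
  "(\<phi> ^^ k) (if passes (\<lambda>i. u i ((\<phi> ^^ k) x) \<le> u i ((\<phi> ^^ k) a)) then a else x)
     = vote_outcome k x a"
proof (cases "(\<phi> ^^ k) a = (\<phi> ^^ k) x")
  case False
  then show ?thesis
    using passes_sincere_iff_maj[where u = u, OF inj_u False] by (simp add: vote_outcome_def)
qed (simp add: vote_outcome_def)

lemma uA_vote_outcome_le: "uA (vote_outcome k x a) \<le> uA ((\<phi> ^^ Suc k) x)"
  using uA_le_phi_if_maj[OF inj_uA, of u "(\<phi> ^^ k) a" "(\<phi> ^^ k) x"]
    phi_improving[of "(\<phi> ^^ k) x"]
  by (cases "\<phi> ((\<phi> ^^ k) x) = (\<phi> ^^ k) x") (auto simp: vote_outcome_def)

lemma vote_outcome_phi: "vote_outcome k x (\<phi> x) = (\<phi> ^^ Suc k) x"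
  using maj_phi_if_moved[OF inj_uA, of u "(\<phi> ^^ k) x"]
  by (cases "(\<phi> ^^ k) (\<phi> x) = (\<phi> ^^ k) x") (auto simp: vote_outcome_def funpow_swap1)

lemma votes_sophisticated:
  assumes "length h + Suc k = T"
  shows "votes (voter_sophisticated u uA T x0) h a
     = return_pmf (\<lambda>i. u i ((\<phi> ^^ k) (dflt x0 h)) \<le> u i ((\<phi> ^^ k) a))"
proof -
  have "T - Suc (length h) = k" using assms by simp
  then show ?thesis by (intro votes_pure) (simp add: voter_sophisticated_def)
qed

lemma cont_sophisticated:
  "length h + k = T \<Longrightarrow> cont (setter_phi u uA x0) (voter_sophisticated u uA T x0) x0 k h
     = return_pmf ((\<phi> ^^ k) (dflt x0 h))"
proof (induction k arbitrary: h)
  case (Suc k)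
  then show ?case
    by (simp add: setter_phi_def votes_sophisticated bind_return_pmf vote_outcome_sincere
        vote_outcome_phi del: funpow.simps)
qed simp

lemma setter_deviation_bound:
  "length h + k = T \<Longrightarrow> z \<in> set_pmf (cont \<sigma>A (voter_sophisticated u uA T x0) x0 k h)
     \<Longrightarrow> uA z \<le> uA ((\<phi> ^^ k) (dflt x0 h))"
proof (induction k arbitrary: h)
  case (Suc k)
  then obtain a where z: "z \<in> set_pmf (cont \<sigma>A (voter_sophisticated u uA T x0) x0 k
      (h @ [(a, \<lambda>i. u i ((\<phi> ^^ k) (dflt x0 h)) \<le> u i ((\<phi> ^^ k) a))]))"
    by (auto simp: votes_sophisticated)
  have "uA z \<le> uA (vote_outcome k (dflt x0 h) a)"
    using Suc.IH[OF _ z] Suc.prems(1) by (simp add: vote_outcome_sincere del: funpow.simps)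
  also have "\<dots> \<le> uA ((\<phi> ^^ Suc k) (dflt x0 h))" by (rule uA_vote_outcome_le)
  finally show ?case .
qed simp

lemma voter_deviation_vote_step:
  assumes "length h + Suc k = T"
    and S: "S \<in> set_pmf (votes ((voter_sophisticated u uA T x0)(i := \<tau>)) h a)"
    and bound: "u i z \<le> u i ((\<phi> ^^ k) (dflt x0 (h @ [(a, S)])))"
  shows "u i z \<le> u i (vote_outcome k (dflt x0 h) a)"
proof -
  let ?x = "dflt x0 h"
  let ?S0 = "\<lambda>j. u j ((\<phi> ^^ k) ?x) \<le> u j ((\<phi> ^^ k) a)"
  have "T - Suc (length h) = k" using assms(1) by simp
  hence others: "S j = ?S0 j" if "j \<noteq> i" for j
    using set_pmf_votes[OF S, of j] that by (simp add: voter_sophisticated_def)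
  have "u i z \<le> u i (if passes S then (\<phi> ^^ k) a else (\<phi> ^^ k) ?x)"
    using bound by (cases "passes S") simp_all
  also have "\<dots> \<le> u i (if passes ?S0 then (\<phi> ^^ k) a else (\<phi> ^^ k) ?x)"
    by (rule sincere_vote_weakly_dominant) (rule others)
  also have "\<dots> = u i (vote_outcome k ?x a)"
    using vote_outcome_sincere[of k ?x a] by (cases "passes ?S0") simp_all
  finally show ?thesis .
qed

lemma voter_deviation_bound:
  "length h + k = T \<Longrightarrow>
     z \<in> set_pmf (cont (setter_phi u uA x0) ((voter_sophisticated u uA T x0)(i := \<tau>)) x0 k h)
     \<Longrightarrow> u i z \<le> u i ((\<phi> ^^ k) (dflt x0 h))"
proof (induction k arbitrary: h)
  case (Suc k)
  let ?a = "\<phi> (dflt x0 h)" and ?\<sigma>V = "(voter_sophisticated u uA T x0)(i := \<tau>)"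
  have step: "cont (setter_phi u uA x0) ?\<sigma>V x0 (Suc k) h
      = votes ?\<sigma>V h ?a \<bind> (\<lambda>S. cont (setter_phi u uA x0) ?\<sigma>V x0 k (h @ [(?a, S)]))"
    by (simp add: setter_phi_def bind_return_pmf)
  from Suc.prems(2) obtain S where S: "S \<in> set_pmf (votes ?\<sigma>V h ?a)"
    and z: "z \<in> set_pmf (cont (setter_phi u uA x0) ?\<sigma>V x0 k (h @ [(?a, S)]))"
    unfolding step set_bind_pmf by blast
  have "u i z \<le> u i (vote_outcome k (dflt x0 h) ?a)"
    using Suc.prems(1) S Suc.IH[OF _ z] by (intro voter_deviation_vote_step) simp_all
  then show ?case by (simp only: vote_outcome_phi)
qed simp

lemma vnode_out_sophisticated_voters:
  assumes "length h + Suc k = T"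
  shows "vnode_out \<sigma>A (voter_sophisticated u uA T x0) x0 T h a
    = cont \<sigma>A (voter_sophisticated u uA T x0) x0 k
        (h @ [(a, \<lambda>i. u i ((\<phi> ^^ k) (dflt x0 h)) \<le> u i ((\<phi> ^^ k) a))])"
proof -
  have "T - Suc (length h) = k" using assms by simp
  then show ?thesis by (simp add: vnode_out_def votes_sophisticated[OF assms] bind_return_pmf)
qed

lemma spe_sophisticated: "spe u uA T x0 (setter_phi u uA x0) (voter_sophisticated u uA T x0)"
  unfolding spe_def
proof (intro allI impI conjI)
  fix h :: "('a, 'v) hist"
  assume "length h < T"
  then obtain k where k: "length h + Suc k = T" by (metis add_Suc_right less_imp_Suc_add)
  let ?sA = "setter_phi u uA x0" and ?sV = "voter_sophisticated u uA T x0" and ?x = "dflt x0 h"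
  have rounds_left: "T - length h = Suc k" "T - Suc (length h) = k" using k by auto
  have node: "node_out ?sA ?sV x0 T h = return_pmf ((\<phi> ^^ Suc k) ?x)"
    unfolding node_out_def rounds_left using k by (intro cont_sophisticated) simp
  show "EU (node_out \<sigma>A' ?sV x0 T h) uA \<le> EU (node_out ?sA ?sV x0 T h) uA" for \<sigma>A'
    unfolding node EU_return_pmf unfolding node_out_def rounds_left
    using k by (intro EU_le_if_bounded setter_deviation_bound) simp_all
  show "EU (node_out ?sA (?sV(i := \<tau>)) x0 T h) (u i) \<le> EU (node_out ?sA ?sV x0 T h) (u i)" for i \<tau>
    unfolding node EU_return_pmf unfolding node_out_def rounds_left
    using k by (intro EU_le_if_bounded voter_deviation_bound) simp_all
  fix a
  let ?S0 = "\<lambda>i. u i ((\<phi> ^^ k) ?x) \<le> u i ((\<phi> ^^ k) a)"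
  note vnode = vnode_out_sophisticated_voters[OF k]
  have vnode_sophisticated: "vnode_out ?sA ?sV x0 T h a = return_pmf (vote_outcome k ?x a)"
    unfolding vnode using k
    by (simp add: cont_sophisticated vote_outcome_sincere del: funpow.simps)
  show "EU (vnode_out \<sigma>A' ?sV x0 T h a) uA \<le> EU (vnode_out ?sA ?sV x0 T h a) uA" for \<sigma>A'
  proof (unfold vnode_sophisticated EU_return_pmf, rule EU_le_if_bounded)
    fix z assume "z \<in> set_pmf (vnode_out \<sigma>A' ?sV x0 T h a)"
    hence "uA z \<le> uA ((\<phi> ^^ k) (dflt x0 (h @ [(a, ?S0)])))"
      unfolding vnode using k by (intro setter_deviation_bound) simp_all
    thus "uA z \<le> uA (vote_outcome k ?x a)"
      by (simp add: vote_outcome_sincere del: funpow.simps)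
  qed
  show "EU (vnode_out ?sA (?sV(i := \<tau>)) x0 T h a) (u i) \<le> EU (vnode_out ?sA ?sV x0 T h a) (u i)"
    for i \<tau>
  proof (unfold vnode_sophisticated EU_return_pmf, rule EU_le_if_bounded)
    fix z assume "z \<in> set_pmf (vnode_out ?sA (?sV(i := \<tau>)) x0 T h a)"
    then obtain S where S: "S \<in> set_pmf (votes (?sV(i := \<tau>)) h a)"
      and z: "z \<in> set_pmf (cont ?sA (?sV(i := \<tau>)) x0 k (h @ [(a, S)]))"
      unfolding vnode_out_def rounds_left set_bind_pmf by blast
    show "u i z \<le> u i (vote_outcome k ?x a)"
      using k S voter_deviation_bound[OF _ z] by (intro voter_deviation_vote_step) simp_all
  qed
qed

lemma as_if_pivotal_sophisticated:
  "as_if_pivotal u T x0 (setter_phi u uA x0) (voter_sophisticated u uA T x0)"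
  unfolding as_if_pivotal_def
proof (intro allI impI)
  fix h :: "('a, 'v) hist" and a x y i
  let ?cont = "\<lambda>S. cont (setter_phi u uA x0) (voter_sophisticated u uA T x0) x0
    (T - Suc (length h)) (h @ [(a, S)])"
  assume "length h < T" and passed: "\<forall>S. passes S \<longrightarrow> ?cont S = return_pmf x"
    and rejected: "\<forall>S. \<not> passes S \<longrightarrow> ?cont S = return_pmf y"
  then obtain k where k: "length h + Suc k = T" by (metis add_Suc_right less_imp_Suc_add)
  have rounds_left: "T - Suc (length h) = k" using k by simp
  have cont_vote: "?cont S = return_pmf ((\<phi> ^^ k) (if passes S then a else dflt x0 h))" for S
    using k by (simp add: rounds_left cont_sophisticated)
  have "x = (\<phi> ^^ k) a" and "y = (\<phi> ^^ k) (dflt x0 h)"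
    using passed rejected passes_unanimous not_passes_unanimous by (auto simp: cont_vote)
  then show "(u i y < u i x \<longrightarrow> voter_sophisticated u uA T x0 i h a = return_pmf True) \<and>
      (u i x < u i y \<longrightarrow> voter_sophisticated u uA T x0 i h a = return_pmf False)"
    by (auto simp: voter_sophisticated_def rounds_left)
qed

lemma is_eq_sophisticated: "is_eq u uA T x0 (setter_phi u uA x0) (voter_sophisticated u uA T x0)"
  unfolding is_eq_def using spe_sophisticated as_if_pivotal_sophisticated by blast

lemma vote_stage_as_if_pivotal:
  assumes "as_if_pivotal u T x0 \<sigma>A \<sigma>V" and "length h + Suc k = T"
    and cont_next: "\<And>a S. cont \<sigma>A \<sigma>V x0 k (h @ [(a, S)])
                             = return_pmf ((\<phi> ^^ k) (dflt x0 (h @ [(a, S)])))"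
  shows "votes \<sigma>V h a \<bind> (\<lambda>S. cont \<sigma>A \<sigma>V x0 k (h @ [(a, S)]))
           = return_pmf (vote_outcome k (dflt x0 h) a)"
proof (cases "(\<phi> ^^ k) a = (\<phi> ^^ k) (dflt x0 h)")
  case True
  then have "cont \<sigma>A \<sigma>V x0 k (h @ [(a, S)]) = return_pmf ((\<phi> ^^ k) (dflt x0 h))" for S
    by (simp add: cont_next)
  then show ?thesis using True by (simp add: vote_outcome_def)
next
  case False
  let ?x = "dflt x0 h"
  have "votes \<sigma>V h a = return_pmf (\<lambda>i. u i ((\<phi> ^^ k) ?x) < u i ((\<phi> ^^ k) a))"
    using assms(1,2) False inj_u by (intro as_if_pivotal_pure_votes) (auto simp: cont_next inj_eq)
  moreover have "passes (\<lambda>i. u i ((\<phi> ^^ k) ?x) < u i ((\<phi> ^^ k) a))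
      \<longleftrightarrow> maj u ((\<phi> ^^ k) a) ((\<phi> ^^ k) ?x)"
    by (simp add: passes_def maj_def)
  ultimately show ?thesis by (simp add: cont_next bind_return_pmf vote_outcome_def)
qed

lemma cont_equilibrium:
  assumes "is_eq u uA T x0 \<sigma>A \<sigma>V"
  shows "length h + k = T \<Longrightarrow> cont \<sigma>A \<sigma>V x0 k h = return_pmf ((\<phi> ^^ k) (dflt x0 h))"
proof (induction k arbitrary: h)
  case (Suc k)
  let ?x = "dflt x0 h"
  have vote: "votes \<sigma>V h a \<bind> (\<lambda>S. cont \<sigma>A \<sigma>V x0 k (h @ [(a, S)]))
      = return_pmf (vote_outcome k ?x a)" for a
    using assms Suc by (intro vote_stage_as_if_pivotal) (auto simp: is_eq_def)
  define \<sigma>A' where "\<sigma>A' = \<sigma>A(h := return_pmf (\<phi> ?x))"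
  have "cont \<sigma>A' \<sigma>V x0 k (h @ [(a, S)]) = cont \<sigma>A \<sigma>V x0 k (h @ [(a, S)])" for a S
    by (rule cont_cong_setter) (auto simp: \<sigma>A'_def)
  then have "cont \<sigma>A' \<sigma>V x0 (Suc k) h = return_pmf ((\<phi> ^^ Suc k) ?x)"
    by (simp add: vote \<sigma>A'_def bind_return_pmf vote_outcome_phi del: funpow.simps)
  moreover have "EU (cont \<sigma>A' \<sigma>V x0 (Suc k) h) uA \<le> EU (cont \<sigma>A \<sigma>V x0 (Suc k) h) uA"
  proof -
    have "spe u uA T x0 \<sigma>A \<sigma>V" and "length h < T"
      using assms Suc.prems by (auto simp: is_eq_def)
    then have "EU (node_out \<sigma>A' \<sigma>V x0 T h) uA \<le> EU (node_out \<sigma>A \<sigma>V x0 T h) uA"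
      unfolding spe_def by blast
    moreover have "T - length h = Suc k" using Suc.prems by simp
    ultimately show ?thesis by (simp add: node_out_def)
  qed
  moreover have "uA z \<le> uA ((\<phi> ^^ Suc k) ?x)" if "z \<in> set_pmf (cont \<sigma>A \<sigma>V x0 (Suc k) h)" for z
    using that uA_vote_outcome_le by (auto simp: vote simp del: funpow.simps)
  ultimately show ?case using return_pmf_if_EU_maximal[OF inj_uA] by (metis EU_return_pmf)
qed simp

lemma fT_eq: "fT u uA T x0 = {(\<phi> ^^ T) x0}"
proof -
  have "cont \<sigma>A \<sigma>V x0 T [] = return_pmf ((\<phi> ^^ T) x0)"
    if "is_eq u uA T x0 \<sigma>A \<sigma>V" for \<sigma>A \<sigma>V
    using cont_equilibrium[OF that, of "[]" T] by (simp add: dflt_def)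
  with is_eq_sophisticated show ?thesis by (fastforce simp: fT_def)
qed

end

theorem lemma1:
  fixes u :: "'v::finite \<Rightarrow> 'a::finite \<Rightarrow> real" and uA :: "'a \<Rightarrow> real"
    and T :: nat and x0 :: 'a
  assumes "odd CARD('v)" and "inj uA" and "\<forall>i. inj (u i)" and "T \<ge> 1"
  shows "fT u uA T x0 = {(phi u uA ^^ T) x0} \<and>
         (\<exists>\<sigma>A \<sigma>V. is_eq u uA T x0 \<sigma>A \<sigma>V \<and>
           (\<forall>h. length h < T \<longrightarrow> \<sigma>A h = return_pmf (phi u uA (dflt x0 h))) \<and>
           (\<forall>h y i. length h < T \<longrightarrow>
              \<sigma>V i h y = return_pmf (u i ((phi u uA ^^ (T - Suc (length h))) y)
                                     \<ge> u i ((phi u uA ^^ (T - Suc (length h))) (dflt x0 h))))) \<and>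
         (fT u uA T x0 = {x0} \<longleftrightarrow> x0 \<in> Eset u uA) \<and>
         (T \<ge> CARD('a) - 1 \<longrightarrow> (\<Union>y\<in>UNIV. fT u uA T y) = Eset u uA)"
proof -
  interpret amendment_game u uA using assms(2,3) by unfold_locales auto
  have fixpoint_iff: "(\<phi> ^^ T) x = x \<longleftrightarrow> x \<in> Eset u uA" for x
    using funpow_eq_self_iff_fixpoint[of \<phi> uA, OF phi_improving \<open>T \<ge> 1\<close>]
    by (simp add: Eset_def)
  show ?thesis
  proof (intro conjI impI exI[of _ "setter_phi u uA x0"]
      exI[of _ "voter_sophisticated u uA T x0"])
    assume "CARD('a) - 1 \<le> T"
    then have "CARD('a) \<le> T + 1" by linarith
    then have "(\<phi> ^^ T) y \<in> Eset u uA" for y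
      using funpow_reaches_fixpoint[of \<phi> uA T y] phi_improving by (auto simp: Eset_def)
    then show "(\<Union>y\<in>UNIV. fT u uA T y) = Eset u uA"
      using fixpoint_iff by (auto simp: fT_eq) metis
  qed (use fixpoint_iff is_eq_sophisticated in
        \<open>auto simp: fT_eq setter_phi_def voter_sophisticated_def\<close>)
qed

end
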